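(* Let $n\ge 2$ and let $\mathcal{F}_1,\dots,\mathcal{F}_n$ be collections of axis-parallel boxes in $\mathbb{R}^d$. Suppose there exists $j\in[d]$ such that for all $\ell\neq k$ in $[n]$, all $B\in\mathcal{F}_\ell$ and all $B'\in\mathcal{F}_k$, we have $\Pi_j(B)\cap\Pi_j(B')\neq\emptyset$. Then there exists $S\subseteq[n]$ with $|S|\ge n-1$ such that for every $i\in S$ there is a hyperplane orthogonal to the $j$-th coordinate axis (i.e., of the form $\{x\in\mathbb{R}^d: x_j=c\}$) that meets every box of $\mathcal{F}_i$.
   Context: An axis-parallel box in $\mathbb{R}^d$ is a set $B=[\alpha_1,\beta_1]\times\dots\times[\alpha_d,\beta_d]$ with real $\alpha_j\le\beta_j$; $\Pi_j(B)=[\alpha_j,\beta_j]$ denotes its projection onto the $j$-th coordinate axis. *)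

theory Defs
  imports "HOL-Analysis.Analysis"
begin

definition is_box :: "(real^'d) set \<Rightarrow> bool" where
  "is_box B \<longleftrightarrow> (\<exists>a b. (\<forall>k. a$k \<le> b$k) \<and> B = cbox a b)"

definition proj :: "'d \<Rightarrow> (real^'d) set \<Rightarrow> real set" where
  "proj j B = (\<lambda>x. x$j) ` B"

end

theory Submission
  imports Defs
begin

text \<open>
  Project every box onto the \<open>j\<close>-th axis; the projections are compact intervals. By Helly's
  theorem on the line, a family of compact intervals without a common point contains two
  disjoint members, one lying strictly to the left of the other. If two different families
  had such pairs, \<open>B'\<close> left of \<open>B\<close> and \<open>C'\<close> left of \<open>C\<close>, then a common point \<open>p\<close> of \<open>B\<close> and \<open>C'\<close> and a
  common point \<open>q\<close> of \<open>C\<close> and \<open>B'\<close> would satisfy both \<open>q < p\<close> and \<open>p < q\<close>. So all families but at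
  most one have a common point \<open>c\<close> of their projections, i.e. are met by the hyperplane
  \<open>x\<^sub>j = c\<close>.
\<close>

lemma Helly_compact:
  fixes \<F> :: "'a::euclidean_space set set"
  assumes "\<And>S. S \<in> \<F> \<Longrightarrow> compact S \<and> convex S"
    and "\<And>T. T \<subseteq> \<F> \<Longrightarrow> finite T \<Longrightarrow> card T \<le> DIM('a) + 1 \<Longrightarrow> \<Inter>T \<noteq> {}"
  shows "\<Inter>\<F> \<noteq> {}"
proof (cases "\<F> = {}")
  case False
  then obtain S where S: "S \<in> \<F>" by blast
  have "S \<inter> \<Inter>\<F> \<noteq> {}"
  proof (rule compact_imp_fip)
    show "compact S" using assms(1) S by blast
    show "closed T" if "T \<in> \<F>" for T using assms(1) that compact_imp_closed by blast
    show "S \<inter> \<Inter>\<F>' \<noteq> {}" if "finite \<F>'" "\<F>' \<subseteq> \<F>" for \<F>'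
    proof -
      have T: "insert S \<F>' \<subseteq> \<F>" "finite (insert S \<F>')" using S that by auto
      have "\<Inter>(insert S \<F>') \<noteq> {}"
      proof (cases "card (insert S \<F>') \<le> DIM('a) + 1")
        case True
        then show ?thesis using assms(2)[OF T] by blast
      next
        case False
        show ?thesis
        proof (rule Helly)
          show "DIM('a) + 1 \<le> card (insert S \<F>')" using False by linarith
          show "\<forall>s\<in>insert S \<F>'. convex s" using T(1) assms(1) by blast
          show "\<Inter>t \<noteq> {}" if "t \<subseteq> insert S \<F>'" "card t = DIM('a) + 1" for t
          proof -
            have "t \<subseteq> \<F>" "finite t" using that(1) T finite_subset by auto
            then show ?thesis using assms(2) that(2) by simp
          qed
        qed
      qed
      then show ?thesis by simp
    qed
  qed
  then show ?thesis by blast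
qed simp

lemma disjoint_intervals_separated:
  fixes I J :: "real set"
  assumes "is_interval I" "is_interval J" "I \<inter> J = {}"
  shows "(\<forall>x\<in>I. \<forall>y\<in>J. x < y) \<or> (\<forall>x\<in>J. \<forall>y\<in>I. x < y)"
proof (rule ccontr)
  assume "\<not> ?thesis"
  then obtain x y x' y' where "x \<in> I" "y \<in> J" "y \<le> x" "x' \<in> J" "y' \<in> I" "y' \<le> x'"
    by (auto simp: not_less)
  show False
  proof (cases "y' \<le> y")
    case True
    then have "y \<in> I" using assms(1) \<open>y' \<in> I\<close> \<open>x \<in> I\<close> \<open>y \<le> x\<close> unfolding is_interval_1 by blast
    then show False using \<open>y \<in> J\<close> assms(3) by blast
  next
    case False
    then have "y \<le> y'" by simp
    then have "y' \<in> J" using assms(2) \<open>y \<in> J\<close> \<open>x' \<in> J\<close> \<open>y' \<le> x'\<close> unfolding is_interval_1 by blast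
    then show False using \<open>y' \<in> I\<close> assms(3) by blast
  qed
qed

lemma Helly_compact_real:
  fixes \<I> :: "real set set"
  assumes "\<And>I. I \<in> \<I> \<Longrightarrow> compact I \<and> convex I"
    and "\<And>I J. I \<in> \<I> \<Longrightarrow> J \<in> \<I> \<Longrightarrow> I \<inter> J \<noteq> {}"
  shows "\<Inter>\<I> \<noteq> {}"
proof (rule Helly_compact[OF assms(1)])
  fix T assume T: "T \<subseteq> \<I>" "finite T" "card T \<le> DIM(real) + 1"
  then have "card T \<le> 2" by simp
  then have "card T = 0 \<or> card T = 1 \<or> card T = 2" by linarith
  then consider "T = {}" | I where "T = {I}" | I J where "T = {I, J}"
    using T(2) by (auto simp: card_1_singleton_iff card_2_iff)
  then show "\<Inter>T \<noteq> {}" using T(1) assms(2) by cases auto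
qed

lemma compact_convex_interval_family_separated:
  fixes \<I> :: "real set set"
  assumes "\<And>I. I \<in> \<I> \<Longrightarrow> compact I \<and> convex I" and "\<Inter>\<I> = {}"
  shows "\<exists>I\<in>\<I>. \<exists>J\<in>\<I>. \<forall>x\<in>J. \<forall>y\<in>I. x < y"
proof -
  obtain I J where "I \<in> \<I>" "J \<in> \<I>" "I \<inter> J = {}"
    using Helly_compact_real[OF assms(1)] assms(2) by blast
  then show ?thesis
    using disjoint_intervals_separated assms(1) is_interval_convex_1 by metis
qed

lemma separated_pairs_cross_disjoint:
  fixes I I' J J' :: "real set"
  assumes "\<forall>x\<in>I'. \<forall>y\<in>I. x < y" and "\<forall>x\<in>J'. \<forall>y\<in>J. x < y" and "I \<inter> J' \<noteq> {}"
  shows "J \<inter> I' = {}"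
proof (rule ccontr)
  assume "J \<inter> I' \<noteq> {}"
  then obtain q where "q \<in> J" "q \<in> I'" by blast
  obtain p where "p \<in> I" "p \<in> J'" using assms(3) by blast
  have "q < p" using assms(1) \<open>q \<in> I'\<close> \<open>p \<in> I\<close> by blast
  moreover have "p < q" using assms(2) \<open>p \<in> J'\<close> \<open>q \<in> J\<close> by blast
  ultimately show False by simp
qed

lemma mem_proj_iff_hyperplane_meets: "c \<in> proj j B \<longleftrightarrow> B \<inter> {x. x$j = c} \<noteq> {}"
  unfolding proj_def by auto

lemma compact_convex_proj_box:
  assumes "is_box B"
  shows "compact (proj j B) \<and> convex (proj j B)"
proof -
  obtain a b where "B = cbox a b" using assms unfolding is_box_def by blast
  then have "compact B" "convex B" by simp_all
  then show ?thesis
    unfolding proj_def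
    by (simp add: compact_continuous_image continuous_on_component convex_linear_image
        bounded_linear.linear[OF bounded_linear_vec_nth])
qed

lemma box_family_separated_if_unpierced:
  assumes "\<And>B. B \<in> \<B> \<Longrightarrow> is_box B" and "\<not> (\<exists>c. \<forall>B \<in> \<B>. c \<in> proj j B)"
  shows "\<exists>B\<in>\<B>. \<exists>B'\<in>\<B>. \<forall>x\<in>proj j B'. \<forall>y\<in>proj j B. x < y"
proof -
  have "compact I \<and> convex I" if "I \<in> proj j ` \<B>" for I
    using that compact_convex_proj_box assms(1) by blast
  moreover have "\<Inter>(proj j ` \<B>) = {}" using assms(2) by auto
  ultimately have "\<exists>I\<in>proj j ` \<B>. \<exists>J\<in>proj j ` \<B>. \<forall>x\<in>J. \<forall>y\<in>I. x < y"
    by (rule compact_convex_interval_family_separated)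
  then show ?thesis by auto
qed

lemma card_ge_card_minus_one_if_unique_exception:
  assumes "finite A" and "\<And>i k. i \<in> A \<Longrightarrow> k \<in> A \<Longrightarrow> \<not> P i \<Longrightarrow> \<not> P k \<Longrightarrow> i = k"
  shows "card {i \<in> A. P i} \<ge> card A - 1"
proof (cases "\<forall>i\<in>A. P i")
  case True
  then have "{i \<in> A. P i} = A" by blast
  then show ?thesis by simp
next
  case False
  then obtain i0 where "i0 \<in> A" "\<not> P i0" by blast
  then have "A - {i0} \<subseteq> {i \<in> A. P i}" using assms(2) by blast
  then have "card (A - {i0}) \<le> card {i \<in> A. P i}" using assms(1) by (intro card_mono) auto
  then show ?thesis using \<open>i0 \<in> A\<close> by simp
qed

theorem lemma2:
  fixes n :: nat and F :: "nat \<Rightarrow> (real^'d) set set" and j :: 'd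
  assumes "n \<ge> 2"
    and "\<And>i B. i \<in> {1..n} \<Longrightarrow> B \<in> F i \<Longrightarrow> is_box B"
    and "\<And>l k B B'. l \<in> {1..n} \<Longrightarrow> k \<in> {1..n} \<Longrightarrow> l \<noteq> k \<Longrightarrow>
           B \<in> F l \<Longrightarrow> B' \<in> F k \<Longrightarrow> proj j B \<inter> proj j B' \<noteq> {}"
  shows "\<exists>S \<subseteq> {1..n}. card S \<ge> n - 1 \<and>
           (\<forall>i \<in> S. \<exists>c::real. \<forall>B \<in> F i. B \<inter> {x. x$j = c} \<noteq> {})"
proof -
  define pierced where "pierced i \<longleftrightarrow> (\<exists>c. \<forall>B \<in> F i. c \<in> proj j B)" for i
  have at_most_one_unpierced: "i = k"
    if ik: "i \<in> {1..n}" "k \<in> {1..n}" and "\<not> pierced i" "\<not> pierced k" for i k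
  proof (rule ccontr)
    assume "i \<noteq> k"
    obtain B B' where B: "B \<in> F i" "B' \<in> F i" "\<forall>x\<in>proj j B'. \<forall>y\<in>proj j B. x < y"
      using box_family_separated_if_unpierced[OF assms(2)[OF ik(1)]] \<open>\<not> pierced i\<close>
      unfolding pierced_def by blast
    obtain C C' where C: "C \<in> F k" "C' \<in> F k" "\<forall>x\<in>proj j C'. \<forall>y\<in>proj j C. x < y"
      using box_family_separated_if_unpierced[OF assms(2)[OF ik(2)]] \<open>\<not> pierced k\<close>
      unfolding pierced_def by blast
    have "proj j C \<inter> proj j B' = {}"
      by (rule separated_pairs_cross_disjoint[OF B(3) C(3) assms(3)[OF ik \<open>i \<noteq> k\<close> B(1) C(2)]])
    then show False using assms(3)[OF ik(2,1) \<open>i \<noteq> k\<close>[symmetric] C(1) B(2)] by simp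
  qed
  have "card {i \<in> {1..n}. pierced i} \<ge> card {1..n} - 1"
    using card_ge_card_minus_one_if_unique_exception[OF finite_atLeastAtMost at_most_one_unpierced] .
  then show ?thesis
    by (intro exI[of _ "{i \<in> {1..n}. pierced i}"] conjI)
      (auto simp: pierced_def mem_proj_iff_hyperplane_meets)
qed

end
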